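(* For each $2p\in\{26, 266, 40, 56, 88, 104, 136, 152, 184, 200, 232, 248, 280, 296, 328, 344, 34, 58, 82, 106, 130, 154, 178, 202, 226, 250, 274, 298, 322, 346\}$ there exists a cyclic DCA$(4,2p+1;2p)$ satisfying P1 and P2.
   Context: A difference covering array DCA$(k,\eta;n)$ over $\mathbb{Z}_n$ (a cyclic DCA) is an $\eta\times k$ matrix $Q=[q(i,j)]$ with entries in $\mathbb{Z}_n$ such that for every pair of distinct columns $j,j'$ the multiset $\{q(i,j)-q(i,j') : 0\le i\le \eta-1\}$ contains every element of $\mathbb{Z}_n$ at least once. A DCA$(k,n+1;n)$ is taken in normalized form: all entries of its last row (row $n$) and last column (column $k-1$) equal $0$. It satisfies P1 if $0$ occurs at least twice in every column, and P2 if for all distinct columns $j,j'$ with $j\neq k-1\neq j'$, the set $\{q(i,j)-q(i,j') : 0\le i\le n-1\}$ equals $\mathbb{Z}_n\setminus\{0\}$. *)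

theory Defs
  imports Main
begin

text \<open>An eta x k matrix over Z_n is represented as Q :: nat => nat => int, where
  Q i j is the entry in row i, column j (0 <= i < eta, 0 <= j < k), and entries
  are the canonical representatives 0..n-1 of Z_n.\<close>

definition is_matrix_Zn :: "nat \<Rightarrow> nat \<Rightarrow> nat \<Rightarrow> (nat \<Rightarrow> nat \<Rightarrow> int) \<Rightarrow> bool" where
  "is_matrix_Zn k eta n Q \<longleftrightarrow>
     (\<forall>i<eta. \<forall>j<k. 0 \<le> Q i j \<and> Q i j < int n)"

definition is_DCA :: "nat \<Rightarrow> nat \<Rightarrow> nat \<Rightarrow> (nat \<Rightarrow> nat \<Rightarrow> int) \<Rightarrow> bool" where
  "is_DCA k eta n Q \<longleftrightarrow> is_matrix_Zn k eta n Q \<and>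
     (\<forall>j<k. \<forall>j'<k. j \<noteq> j' \<longrightarrow>
        (\<forall>d\<in>{0..<int n}. \<exists>i<eta. (Q i j - Q i j') mod int n = d))"

definition normalized_DCA :: "nat \<Rightarrow> nat \<Rightarrow> (nat \<Rightarrow> nat \<Rightarrow> int) \<Rightarrow> bool" where
  "normalized_DCA k n Q \<longleftrightarrow> is_DCA k (n + 1) n Q \<and>
     (\<forall>j<k. Q n j = 0) \<and> (\<forall>i<n + 1. Q i (k - 1) = 0)"

definition DCA_P1 :: "nat \<Rightarrow> nat \<Rightarrow> (nat \<Rightarrow> nat \<Rightarrow> int) \<Rightarrow> bool" where
  "DCA_P1 k n Q \<longleftrightarrow> (\<forall>j<k. 2 \<le> card {i. i < n + 1 \<and> Q i j = 0})"

definition DCA_P2 :: "nat \<Rightarrow> nat \<Rightarrow> (nat \<Rightarrow> nat \<Rightarrow> int) \<Rightarrow> bool" where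
  "DCA_P2 k n Q \<longleftrightarrow> (\<forall>j<k - 1. \<forall>j'<k - 1. j \<noteq> j' \<longrightarrow>
     {(Q i j - Q i j') mod int n | i. i < n} = {1..<int n})"

end

theory Submission
  imports Defs
begin

text \<open>Take the rows (i, b i, c i, 0) for i < n and append a zero row. If b and c are
  permutations of Z_n and each of the differences b i - i, c i - i and c i - b i takes every
  nonzero residue, then any two of the first three columns differ by every nonzero residue in
  the first n rows (which is P2) and by 0 in the last row; a column paired with the zero column
  differs by everything because it is a permutation. Each column vanishes in the last row and
  in one further row, which is P1. For the thirty orders in question such b and c were found by
  computer search; they are verified by evaluation.\<close>

lemma image_uminus_mod_nonzero_residues:
  assumes "(\<lambda>i. f i mod int n) ` A = {1..<int n}"
  shows "(\<lambda>i. (- f i) mod int n) ` A = {1..<int n}"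
proof -
  have "(- f i) mod int n = int n - f i mod int n" if "i \<in> A" for i
  proof -
    have "f i mod int n \<in> {1..<int n}" using assms that by blast
    then show ?thesis by (simp add: zmod_zminus1_eq_if)
  qed
  then have "(\<lambda>i. (- f i) mod int n) ` A = (\<lambda>d. int n - d) ` (\<lambda>i. f i mod int n) ` A"
    by (simp add: image_image cong: image_cong)
  also have "\<dots> = {1..<int n}"
    unfolding assms by (auto simp: image_iff intro!: bexI[where x = "int n - d" for d])
  finally show ?thesis .
qed

definition zero_bordered :: "nat \<Rightarrow> nat \<Rightarrow> (nat \<Rightarrow> nat \<Rightarrow> int) \<Rightarrow> nat \<Rightarrow> nat \<Rightarrow> int" where
  "zero_bordered n r C i j = (if i < n \<and> j < r then C i j else 0)"

context
  fixes n r :: nat and C :: "nat \<Rightarrow> nat \<Rightarrow> int"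
  assumes n_pos: "0 < n"
    and columns_perm: "\<And>j. j < r \<Longrightarrow> (\<lambda>i. C i j) ` {..<n} = {0..<int n}"
    and columns_diff: "\<And>j j'. j' < j \<Longrightarrow> j < r \<Longrightarrow>
      (\<lambda>i. (C i j - C i j') mod int n) ` {..<n} = {1..<int n}"
begin

private abbreviation (input) "Q \<equiv> zero_bordered n r C"

lemma zero_bordered_column_perm:
  "j < r \<Longrightarrow> (\<lambda>i. Q i j) ` {..<n} = {0..<int n}"
proof -
  assume "j < r"
  then have "(\<lambda>i. Q i j) ` {..<n} = (\<lambda>i. C i j) ` {..<n}"
    by (intro image_cong) (auto simp: zero_bordered_def)
  then show ?thesis using columns_perm \<open>j < r\<close> by simp
qed

lemma zero_bordered_diff:
  assumes "j < r" "j' < r" "j \<noteq> j'"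
  shows "(\<lambda>i. (Q i j - Q i j') mod int n) ` {..<n} = {1..<int n}"
proof -
  have "(\<lambda>i. (C i j - C i j') mod int n) ` {..<n} = {1..<int n}"
  proof (cases "j' < j")
    case True
    then show ?thesis using columns_diff assms by blast
  next
    case False
    then have "(\<lambda>i. (C i j' - C i j) mod int n) ` {..<n} = {1..<int n}"
      using columns_diff assms by simp
    from image_uminus_mod_nonzero_residues[OF this] show ?thesis by simp
  qed
  moreover have "(\<lambda>i. (Q i j - Q i j') mod int n) ` {..<n} = (\<lambda>i. (C i j - C i j') mod int n) ` {..<n}"
    using assms by (intro image_cong) (auto simp: zero_bordered_def)
  ultimately show ?thesis by simp
qed

lemma zero_bordered_is_matrix: "is_matrix_Zn (Suc r) (n + 1) n Q"
  using zero_bordered_column_perm n_pos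
  unfolding is_matrix_Zn_def zero_bordered_def by (fastforce simp: image_subset_iff)

lemma zero_bordered_covers:
  assumes "j < Suc r" "j' < Suc r" "j \<noteq> j'" "d \<in> {0..<int n}"
  shows "\<exists>i<n + 1. (Q i j - Q i j') mod int n = d"
proof -
  consider "d = 0" | "j < r" "j' < r" "d \<noteq> 0" | "j = r" "j' < r" "d \<noteq> 0" | "j < r" "j' = r"
    using assms by linarith
  then show ?thesis
  proof cases
    case 1
    then show ?thesis by (intro exI[of _ n]) (simp add: zero_bordered_def)
  next
    case 2
    then have "d \<in> (\<lambda>i. (Q i j - Q i j') mod int n) ` {..<n}"
      using zero_bordered_diff[OF 2(1,2) assms(3)] assms(4) by simp
    then obtain i where "i < n" "(Q i j - Q i j') mod int n = d" by blast
    then show ?thesis by (intro exI[of _ i]) simp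
  next
    case 3
    have "int n - d \<in> (\<lambda>i. Q i j') ` {..<n}"
      using zero_bordered_column_perm[OF 3(2)] 3(3) assms(4) by auto
    then obtain i where "i < n" "Q i j' = int n - d" by (auto simp: image_iff)
    then show ?thesis using 3 assms(4) by (intro exI[of _ i]) (simp add: zero_bordered_def)
  next
    case 4
    then have "d \<in> (\<lambda>i. Q i j) ` {..<n}"
      using zero_bordered_column_perm[OF 4(1)] assms(4) by simp
    then obtain i where "i < n" "Q i j = d" by blast
    then show ?thesis using 4 assms(4) by (intro exI[of _ i]) (simp add: zero_bordered_def)
  qed
qed

lemma zero_bordered_P1: "DCA_P1 (Suc r) n Q"
  unfolding DCA_P1_def
proof (intro allI impI)
  fix j assume "j < Suc r"
  have "\<exists>i<n. Q i j = 0"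
  proof (cases "j < r")
    case True
    have "0 \<in> (\<lambda>i. Q i j) ` {..<n}" using zero_bordered_column_perm[OF True] n_pos by simp
    then show ?thesis by (metis imageE lessThan_iff)
  next
    case False
    then show ?thesis using n_pos by (intro exI[of _ 0]) (simp add: zero_bordered_def)
  qed
  then obtain i where "i < n" "Q i j = 0" by blast
  then have "{i, n} \<subseteq> {i'. i' < n + 1 \<and> Q i' j = 0}" by (simp add: zero_bordered_def)
  then have "card {i, n} \<le> card {i'. i' < n + 1 \<and> Q i' j = 0}"
    by (intro card_mono) simp_all
  then show "2 \<le> card {i'. i' < n + 1 \<and> Q i' j = 0}" using \<open>i < n\<close> by simp
qed

lemma zero_bordered_P2: "DCA_P2 (Suc r) n Q"
  using zero_bordered_diff unfolding DCA_P2_def by (simp add: setcompr_eq_image lessThan_def)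

lemma zero_bordered_normalized_DCA: "normalized_DCA (Suc r) n Q"
  using zero_bordered_is_matrix zero_bordered_covers
  unfolding normalized_DCA_def is_DCA_def by (auto simp: zero_bordered_def)

lemma zero_bordered_DCA_P1_P2:
  "normalized_DCA (Suc r) n Q \<and> DCA_P1 (Suc r) n Q \<and> DCA_P2 (Suc r) n Q"
  using zero_bordered_normalized_DCA zero_bordered_P1 zero_bordered_P2 by blast

end

(* Decides set xs = {lo..<hi} by bisection, so that evaluation by code_simp takes
   O(n log n) comparisons. *)
function covers_interval :: "int \<Rightarrow> int \<Rightarrow> int list \<Rightarrow> bool" where
  "covers_interval lo hi xs =
    (if hi \<le> lo + 1 then xs \<noteq> [] \<and> (\<forall>x\<in>set xs. x = lo)
     else let mid = (lo + hi) div 2 in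
       covers_interval lo mid (filter (\<lambda>x. x < mid) xs) \<and>
       covers_interval mid hi (filter (\<lambda>x. mid \<le> x) xs))"
  by auto
termination by (relation "measure (\<lambda>(lo, hi, _). nat (hi - lo))") auto

declare covers_interval.simps [simp del]

lemma set_eq_interval_if_covers_interval:
  "covers_interval lo hi xs \<Longrightarrow> lo < hi \<Longrightarrow> set xs = {lo..<hi}"
proof (induction lo hi xs rule: covers_interval.induct)
  case (1 lo hi xs)
  show ?case
  proof (cases "hi \<le> lo + 1")
    case True
    then have "xs \<noteq> []" "\<forall>x\<in>set xs. x = lo" "hi = lo + 1"
      using "1.prems" by (simp_all add: covers_interval.simps[of lo hi xs])
    then show ?thesis by (cases xs) auto
  next
    case False
    define mid where "mid = (lo + hi) div 2"
    have "lo < mid" "mid < hi" using False by (simp_all add: mid_def)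
    moreover have "covers_interval lo mid (filter (\<lambda>x. x < mid) xs)"
      "covers_interval mid hi (filter (\<lambda>x. mid \<le> x) xs)"
      using "1.prems" False by (simp_all add: covers_interval.simps[of lo hi xs] mid_def Let_def)
    ultimately have lower: "set (filter (\<lambda>x. x < mid) xs) = {lo..<mid}"
      and upper: "set (filter (\<lambda>x. mid \<le> x) xs) = {mid..<hi}"
      using "1.IH" False mid_def by blast+
    have "set xs = set (filter (\<lambda>x. x < mid) xs) \<union> set (filter (\<lambda>x. mid \<le> x) xs)"
      by auto
    then show ?thesis unfolding lower upper using \<open>lo < mid\<close> \<open>mid < hi\<close> by auto
  qed
qed

lemma set_map2_eq_image:
  assumes "length xs = n" "length ys = n"
  shows "set (map2 f xs ys) = (\<lambda>i. f (xs ! i) (ys ! i)) ` {..<n}"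
  using assms by (auto simp: set_zip image_iff)

lemma image_nth_eq_set: "length xs = n \<Longrightarrow> (\<lambda>i. xs ! i) ` {..<n} = set xs"
  using nth_image[of "length xs" xs] by (simp add: atLeast0LessThan)

(* Recursive rather than via list_all or sorted_wrt (cf. columns_check_iff): code_simp would
   otherwise unfold covers_interval symbolically under the binder, which is very slow. *)
fun diffs_check :: "nat \<Rightarrow> int list \<Rightarrow> int list list \<Rightarrow> bool" where
  "diffs_check n xs [] \<longleftrightarrow> True"
| "diffs_check n xs (ys # yss) \<longleftrightarrow>
     covers_interval 1 (int n) (map2 (\<lambda>y x. (y - x) mod int n) ys xs) \<and> diffs_check n xs yss"

fun columns_check :: "nat \<Rightarrow> int list list \<Rightarrow> bool" where
  "columns_check n [] \<longleftrightarrow> True"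
| "columns_check n (xs # xss) \<longleftrightarrow>
     length xs = n \<and> covers_interval 0 (int n) xs \<and> diffs_check n xs xss \<and> columns_check n xss"

lemma diffs_check_iff:
  "diffs_check n xs yss \<longleftrightarrow>
     (\<forall>ys\<in>set yss. covers_interval 1 (int n) (map2 (\<lambda>y x. (y - x) mod int n) ys xs))"
  by (induction yss) auto

lemma columns_check_iff:
  "columns_check n cols \<longleftrightarrow>
     (\<forall>xs\<in>set cols. length xs = n \<and> covers_interval 0 (int n) xs) \<and>
     sorted_wrt (\<lambda>xs ys. covers_interval 1 (int n) (map2 (\<lambda>y x. (y - x) mod int n) ys xs)) cols"
  by (induction cols) (auto simp: diffs_check_iff)

lemma DCA_if_columns_check:
  assumes "columns_check n cols" "1 < n"
  shows "\<exists>Q. normalized_DCA (Suc (length cols)) n Q \<and> DCA_P1 (Suc (length cols)) n Q \<and>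
    DCA_P2 (Suc (length cols)) n Q"
proof -
  let ?C = "\<lambda>i j. cols ! j ! i"
  have columns: "\<forall>xs\<in>set cols. length xs = n \<and> covers_interval 0 (int n) xs"
    and pairs: "sorted_wrt (\<lambda>xs ys. covers_interval 1 (int n)
      (map2 (\<lambda>y x. (y - x) mod int n) ys xs)) cols"
    using assms(1) by (simp_all add: columns_check_iff)
  have len: "length (cols ! j) = n" if "j < length cols" for j
    using columns that by simp
  have perm: "(\<lambda>i. ?C i j) ` {..<n} = {0..<int n}" if "j < length cols" for j
  proof -
    have "(\<lambda>i. ?C i j) ` {..<n} = set (cols ! j)"
      by (rule image_nth_eq_set) (rule len[OF that])
    also have "\<dots> = {0..<int n}"
      by (rule set_eq_interval_if_covers_interval) (use columns that assms(2) in simp_all)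
    finally show ?thesis .
  qed
  have diff: "(\<lambda>i. (?C i j - ?C i j') mod int n) ` {..<n} = {1..<int n}"
    if "j' < j" "j < length cols" for j j'
  proof -
    have "(\<lambda>i. (?C i j - ?C i j') mod int n) ` {..<n} =
        set (map2 (\<lambda>y x. (y - x) mod int n) (cols ! j) (cols ! j'))"
      by (rule set_map2_eq_image[symmetric]) (use len that in simp_all)
    also have "\<dots> = {1..<int n}"
      by (rule set_eq_interval_if_covers_interval)
        (use pairs that assms(2) in \<open>simp_all add: sorted_wrt_iff_nth_less\<close>)
    finally show ?thesis .
  qed
  have "0 < n" using assms(2) by simp
  from zero_bordered_DCA_P1_P2[of n "length cols" ?C, OF this perm diff] show ?thesis by blast
qed

(* An entry (n, b, c) describes the columns i, b i, c i (for rows i < n) of a DCA(4, n + 1; n);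
   the lists were found by computer search. *)
definition DCA_4_witnesses :: "(nat \<times> int list \<times> int list) list" where
  "DCA_4_witnesses = [
   (26,
    [20,8,7,19,3,2,16,13,25,11,23,24,21,9,6,18,17,5,4,1,15,14,0,12,22,10],
    [14,10,3,22,12,18,1,17,23,16,9,5,8,4,20,0,6,15,21,24,7,13,19,25,2,11]),
   (266,
    [235,87,98,7,233,193,223,246,219,84,126,213,211,209,74,192,203,68,199,32,125,218,58,56,231,
    191,183,111,46,164,42,40,38,36,97,57,17,243,26,30,256,216,43,3,96,189,149,242,69,4,122,133,
    131,262,127,258,15,121,252,161,115,214,41,1,227,54,236,240,232,230,253,226,173,0,220,186,
    146,106,212,159,119,206,172,202,67,185,196,194,65,158,118,78,184,264,47,51,144,104,197,24,
    35,77,170,130,90,25,143,21,152,156,148,13,169,9,140,182,136,134,265,22,261,208,168,255,120,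
    251,249,247,245,154,114,207,167,260,100,180,229,94,92,153,88,73,166,82,86,179,139,99,72,19,
    112,205,64,195,60,178,5,187,52,151,48,204,177,124,217,44,137,34,165,163,28,70,157,155,20,18,
    16,147,145,10,8,6,29,2,215,175,135,228,55,123,108,201,250,254,113,244,109,107,238,14,101,
    200,160,95,80,224,222,93,85,83,81,66,210,75,79,71,132,225,198,12,105,59,190,188,53,171,49,
    91,45,176,174,39,37,117,33,31,162,27,50,23,103,63,150,116,76,11,129,89,138,142,102,62,263,
    248,259,257,128,221,181,141,234,61,110,241,239,237],
    [102,153,10,194,15,235,225,143,133,220,138,128,215,36,123,41,31,118,72,256,77,164,21,241,26,
    246,103,154,11,195,185,6,226,180,98,52,139,93,83,134,88,175,262,216,170,124,211,165,252,242,
    160,17,104,191,12,232,150,7,94,145,2,53,140,227,48,135,258,43,33,253,38,28,212,166,156,207,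
    161,115,105,23,243,100,18,141,228,146,136,90,8,95,182,3,126,44,167,85,172,259,80,34,24,75,
    162,249,203,193,111,101,188,239,96,50,234,224,45,229,86,40,127,178,35,219,173,163,117,71,
    158,112,199,250,204,25,245,66,189,107,97,51,5,56,179,230,184,174,92,46,0,87,210,261,82,169,
    159,113,200,251,205,62,149,67,190,108,231,16,236,57,144,1,221,42,129,47,37,257,78,32,119,
    206,27,247,68,22,73,196,114,201,155,109,63,186,237,58,181,99,222,176,263,217,171,89,79,130,
    84,74,125,248,202,120,110,197,151,69,192,13,64,54,238,59,49,233,187,177,131,218,39,223,213,
    264,121,208,29,116,70,254,244,198,152,106,157,14,65,19,9,60,147,4,55,142,132,183,137,91,214,
    265,255,76,260,81,168,122,209,30,20,240,61,148]),
   (40,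
    [6,21,11,32,0,17,23,34,12,3,35,8,4,29,37,10,36,5,25,24,28,31,33,26,14,27,1,20,2,13,9,22,30,
    19,7,16,18,15,39,38],
    [11,23,5,20,12,35,13,17,28,6,1,32,24,39,18,21,0,31,10,4,36,22,2,25,7,34,14,16,3,27,26,9,19,
    38,29,8,15,30,37,33]),
   (56,
    [36,7,1,32,14,21,49,54,40,37,13,0,30,43,19,42,44,41,11,50,18,29,31,2,26,51,23,10,6,33,15,46,
    52,47,35,16,22,3,55,34,28,25,5,12,38,27,53,24,4,39,17,8,48,45,9,20],
    [13,42,45,31,24,43,1,14,25,35,41,7,20,18,16,54,9,47,12,46,44,11,36,38,0,22,4,30,40,51,28,50,
    5,34,52,19,8,26,48,6,17,27,53,23,32,10,37,39,29,2,49,55,21,3,33,15]),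
   (88,
    [35,24,11,9,50,84,23,60,18,69,22,72,71,28,46,29,83,44,15,21,7,77,6,64,66,76,39,32,78,53,51,
    0,2,85,19,33,14,36,58,68,26,52,87,17,82,49,62,48,3,37,86,45,59,12,79,81,74,13,47,40,42,1,70,
    8,10,16,27,57,63,65,30,5,75,4,54,41,43,20,34,56,55,73,31,25,67,61,38,80],
    [41,7,24,8,15,63,52,22,75,81,2,86,73,43,18,36,25,55,4,16,65,69,50,14,51,79,60,78,23,61,44,
    54,39,13,28,68,11,27,26,6,71,83,40,72,87,1,58,46,37,85,74,32,77,31,80,56,3,33,20,62,19,29,
    34,82,35,67,76,84,17,21,66,64,57,47,38,0,53,59,10,30,49,9,12,48,45,5,42,70]),
   (104,
    [42,68,95,60,50,96,103,61,6,21,59,29,14,48,15,101,74,76,23,92,82,0,31,89,38,85,39,57,83,49,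
    78,25,43,13,2,72,10,8,11,65,67,45,58,33,27,9,79,44,91,40,35,73,51,41,90,93,63,5,66,16,75,20,
    94,24,87,37,18,84,99,53,98,17,7,69,22,100,19,80,102,4,46,56,47,64,54,32,3,97,55,81,30,28,70,
    88,71,36,26,12,34,1,86,77,62,52],
    [27,21,31,18,23,1,99,24,71,73,11,52,67,65,79,28,63,45,43,62,59,25,7,32,3,97,75,60,14,77,68,
    36,58,57,88,2,95,49,19,92,42,17,76,16,34,101,103,22,26,41,15,72,70,9,84,48,10,93,0,94,54,33,
    20,66,46,53,40,90,38,85,8,4,82,13,80,86,74,5,100,6,51,89,39,30,47,69,55,64,50,37,56,78,91,
    29,35,102,87,61,44,96,83,81,12,98]),
   (136,
    [128,64,13,135,24,44,91,65,94,106,7,101,20,6,59,1,70,42,111,51,58,78,95,73,116,80,11,109,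
    102,60,63,77,112,108,121,103,76,86,41,99,134,54,29,27,122,22,67,17,110,28,5,19,30,26,35,89,
    18,62,87,57,74,36,3,75,130,84,93,61,50,34,107,97,38,2,69,131,56,92,125,127,82,72,45,55,120,
    52,33,105,16,32,21,115,114,46,9,43,12,14,133,39,90,118,47,113,10,88,31,81,40,68,15,117,4,48,
    85,23,104,126,119,53,0,8,129,83,100,124,49,79,132,98,37,25,96,66,123,71],
    [32,110,88,71,80,38,129,46,45,23,121,98,40,135,113,82,33,111,37,27,61,19,97,50,48,18,89,34,
    117,14,81,86,76,78,16,51,56,127,92,91,133,103,100,131,25,79,49,90,53,130,116,7,13,31,101,
    126,109,75,93,42,1,118,17,59,29,114,12,10,57,3,69,62,85,47,96,43,60,102,104,83,5,30,112,123,
    20,94,52,66,68,22,128,67,21,63,0,107,28,39,8,11,77,15,73,70,105,74,65,54,36,2,125,106,84,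
    134,108,35,64,55,41,6,44,58,124,115,24,122,132,87,72,119,4,26,120,95,9,99]),
   (152,
    [101,135,78,12,21,0,10,76,118,91,25,115,89,107,102,83,9,52,41,116,5,120,42,104,1,112,50,63,
    73,95,58,4,145,20,66,151,2,88,81,132,94,143,82,44,57,7,90,108,126,23,29,99,142,56,113,67,45,
    55,121,35,117,147,53,136,114,32,130,47,54,103,69,15,146,92,70,59,86,8,85,27,26,75,93,71,17,
    68,18,140,134,60,33,128,150,123,34,51,14,139,49,19,106,79,133,16,122,28,65,31,62,111,149,
    144,141,127,74,43,137,80,13,87,110,148,97,131,129,64,98,96,125,39,30,84,6,48,38,72,22,40,46,
    3,37,11,61,124,109,100,138,36,105,119,77,24],
    [88,144,23,19,68,22,91,127,70,140,53,121,104,100,75,101,8,26,133,147,64,78,135,27,120,54,51,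
    41,24,16,43,15,80,6,35,77,10,134,105,3,110,48,95,111,96,84,87,67,82,44,73,149,106,38,37,129,
    36,116,1,109,92,0,117,119,102,42,47,145,50,148,45,49,74,146,31,29,98,122,125,85,46,28,13,
    141,124,150,83,7,18,126,93,39,118,60,143,81,66,20,97,61,90,132,137,59,114,30,25,21,138,128,
    65,123,136,12,103,57,40,34,69,113,58,86,33,17,76,62,79,99,56,4,71,55,130,14,63,11,2,142,131,
    89,72,112,5,151,52,94,115,107,32,108,9,139]),
   (184,
    [44,135,112,7,168,143,100,150,16,14,125,18,133,67,76,91,141,167,121,30,57,175,144,147,52,
    134,40,42,84,99,28,94,81,107,113,146,148,23,96,106,88,31,17,11,105,131,72,39,21,130,152,170,
    0,55,48,38,32,98,36,123,137,71,145,50,53,171,5,10,128,87,92,62,69,34,172,22,8,110,45,74,132,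
    111,56,126,93,119,41,43,9,154,177,163,109,138,129,6,117,122,173,35,33,151,180,63,140,90,77,
    70,80,166,156,27,20,58,165,174,65,183,25,83,73,26,161,19,24,102,108,139,181,86,157,75,97,
    162,176,158,120,54,61,118,60,47,13,159,29,114,149,3,37,155,101,182,64,82,116,59,4,66,12,179,
    153,142,49,115,160,95,1,51,169,103,68,79,85,2,89,15,164,78,136,178,104,127,124,46],
    [134,116,39,45,26,12,143,171,10,18,53,119,84,172,167,109,32,68,17,107,72,148,99,121,130,82,
    19,3,22,124,31,135,100,20,37,83,174,8,147,123,66,180,1,105,36,76,79,157,168,178,183,59,110,
    144,103,7,94,118,23,129,104,28,141,87,52,16,169,127,46,96,151,75,40,90,71,115,106,14,69,63,
    182,60,95,11,160,48,125,33,108,62,153,177,56,78,181,131,4,2,25,5,44,0,155,149,86,34,173,67,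
    162,50,179,161,146,158,137,55,112,136,165,81,152,98,9,133,6,114,43,93,140,38,65,145,88,54,
    159,163,142,70,29,111,126,156,57,117,24,102,85,77,64,132,21,47,170,42,35,89,154,58,139,49,
    92,74,13,101,122,176,41,61,80,164,175,113,120,30,97,73,166,138,15,51,150,128,27,91]),
   (200,
    [161,48,122,105,49,196,164,115,37,44,194,17,199,92,88,73,13,40,166,29,183,14,102,85,89,36,
    138,41,177,106,136,11,165,132,148,127,151,98,46,109,141,128,182,59,129,190,84,75,27,186,54,
    77,19,72,90,133,93,78,126,189,103,168,32,39,69,16,198,155,187,64,156,171,45,112,170,87,33,
    158,6,3,63,154,192,125,9,56,104,135,47,146,114,137,185,152,28,193,31,38,86,149,23,134,52,99,
    15,130,58,61,107,26,176,131,25,22,30,147,91,118,0,163,101,188,12,79,175,110,124,95,67,184,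
    74,97,159,2,10,53,153,80,160,43,143,94,172,65,35,76,18,121,117,24,96,191,5,82,8,7,111,20,
    120,123,81,174,62,145,195,70,144,1,57,66,34,157,179,162,68,113,71,60,180,169,21,108,142,119,
    55,150,178,181,197,4,116,51,139,42,50,167,173,100,140,83],
    [43,100,11,197,59,16,86,76,175,32,7,101,186,148,142,153,107,64,103,5,178,61,51,157,39,96,
    199,9,155,97,54,124,171,128,82,132,162,133,143,65,3,160,191,48,19,169,66,156,150,37,87,121,
    146,8,35,73,167,173,183,25,38,140,78,88,99,56,179,196,30,172,34,104,31,188,75,12,47,113,23,
    120,118,181,18,137,79,36,46,136,110,117,67,41,111,168,2,93,102,53,163,45,198,21,158,68,94,
    89,159,149,190,57,14,184,91,125,55,192,182,193,170,0,123,180,98,108,174,129,26,116,70,112,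
    147,161,166,165,95,13,187,44,10,40,58,1,138,17,154,176,139,69,135,92,194,164,151,105,122,72,
    42,24,50,80,83,141,131,77,134,109,106,29,115,177,27,81,126,145,62,33,22,4,90,85,63,20,71,28,
    114,49,119,189,195,52,74,144,6,185,15,152,127,84,130,60]),
   (232,
    [193,88,54,72,210,103,126,168,53,139,198,32,157,148,21,123,110,95,226,108,133,15,221,204,82,
    92,205,31,10,203,94,48,170,16,57,144,85,36,41,124,26,79,141,220,70,231,150,200,49,151,109,
    195,158,116,62,160,25,136,77,24,13,156,177,120,174,179,45,100,105,196,118,3,209,135,190,176,
    74,4,146,19,2,207,97,27,46,11,81,35,90,47,65,212,134,84,86,167,178,119,33,172,106,8,230,67,
    113,75,186,191,194,164,142,83,89,147,214,208,50,183,69,215,181,224,169,107,138,12,37,115,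
    182,59,154,128,29,52,121,131,38,188,66,23,5,51,22,184,225,228,189,39,213,7,166,163,98,43,
    122,55,73,56,78,63,61,76,125,71,114,96,222,180,153,187,93,87,202,223,18,211,14,143,206,219,
    117,60,162,227,102,99,145,80,30,216,129,127,197,171,229,40,185,140,218,20,173,44,58,0,161,
    64,130,159,149,199,165,192,137,104,42,175,9,155,17,152,34,28,1,132,217,111,101,112,6,68,201,
    91],
    [115,223,10,188,213,56,174,88,95,152,222,104,27,179,86,177,129,112,202,20,123,92,182,36,73,
    135,230,37,161,168,114,184,17,183,94,200,83,207,142,216,77,224,74,0,49,204,190,132,227,68,
    54,105,225,71,170,48,91,211,150,180,139,119,82,80,141,220,130,212,3,167,14,65,51,64,62,128,
    57,99,226,165,29,24,206,41,117,4,138,149,205,100,186,192,61,195,70,133,33,60,166,108,121,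
    127,50,1,203,136,214,109,181,59,146,217,67,96,78,172,9,76,58,201,163,15,106,193,185,155,154,
    69,157,16,38,120,191,87,18,169,101,111,134,45,55,72,66,52,219,159,46,145,151,148,162,137,
    221,12,210,13,131,231,26,5,63,23,6,229,21,47,122,32,43,164,102,97,197,144,218,89,53,8,34,81,
    187,143,198,189,113,84,178,228,85,75,110,173,215,44,42,28,31,7,158,160,79,147,90,176,11,171,
    22,25,175,196,2,208,107,103,118,125,39,156,98,124,93,35,30,140,19,116,194,40,153,199,126,
    209]),
   (248,
    [221,236,219,235,58,28,243,191,218,33,143,50,157,232,43,103,42,148,12,142,73,64,216,139,93,
    185,115,95,26,37,4,94,62,60,208,202,29,237,40,186,134,140,244,167,69,56,111,154,206,41,135,
    138,118,17,112,246,5,117,68,106,25,92,83,214,169,132,104,74,189,45,131,182,85,212,16,187,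
    210,245,220,19,125,44,79,99,21,84,8,242,165,0,127,226,230,164,168,86,81,1,51,194,225,120,
    199,3,90,77,223,207,141,200,240,146,161,153,23,130,198,32,152,75,201,229,195,31,22,205,188,
    82,241,57,144,66,13,192,224,147,6,9,180,34,53,233,67,59,78,209,91,126,114,228,172,234,113,
    20,15,175,133,137,163,7,98,100,63,211,173,89,87,170,46,65,76,247,213,96,156,203,109,136,159,
    35,30,52,183,239,190,217,24,71,102,193,107,151,14,48,184,231,174,145,155,166,105,128,55,150,
    122,97,176,10,158,197,227,179,70,49,88,11,61,149,27,215,18,204,124,47,54,101,80,178,121,36,
    160,162,2,177,123,39,38,116,196,119,181,129,171,238,110,72,108,222],
    [175,100,30,9,97,108,242,65,169,18,206,71,99,124,170,53,189,132,220,171,7,16,236,41,23,38,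
    186,221,157,74,20,11,229,164,36,247,195,146,52,111,125,180,68,73,227,188,130,211,145,6,94,
    199,217,166,240,187,151,78,8,51,167,96,110,39,183,104,40,27,75,62,162,15,91,120,196,149,29,
    134,88,205,123,12,54,137,139,144,244,215,31,152,230,203,193,160,28,191,63,66,34,55,79,176,
    122,45,37,14,210,225,235,192,92,143,127,86,138,131,5,208,0,21,35,158,190,201,25,194,32,95,
    67,106,172,207,83,116,64,121,117,178,204,59,115,214,10,233,13,2,98,159,209,24,128,147,163,
    156,26,153,179,234,238,85,177,48,202,17,87,58,42,223,197,218,84,129,243,72,224,61,135,80,
    182,241,165,212,22,49,237,114,148,105,185,150,198,161,133,112,56,93,81,222,126,3,107,4,90,
    239,101,46,228,103,173,82,142,69,245,118,136,1,47,154,70,57,141,168,44,113,213,226,60,43,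
    219,184,76,155,109,50,174,33,181,200,232,89,19,246,102,119,77,216,140,231]),
   (280,
    [5,185,244,184,97,221,72,158,49,257,180,150,215,199,8,2,93,189,116,274,45,223,84,24,239,235,
    52,216,247,17,130,268,41,193,202,102,263,131,96,92,225,125,64,4,139,155,172,78,269,27,70,
    108,81,39,142,62,173,191,76,212,265,25,44,124,179,61,12,36,47,227,10,88,121,133,228,140,213,
    111,196,154,211,205,86,104,79,135,132,138,87,7,230,68,95,19,208,260,253,69,176,254,65,183,
    144,224,119,55,98,276,249,67,80,48,275,73,242,222,143,91,174,152,11,243,264,204,57,255,232,
    58,9,77,110,168,35,279,28,220,53,151,114,272,51,23,186,166,59,175,258,236,207,187,50,148,1,
    13,262,200,83,71,194,112,231,85,266,126,277,261,198,118,89,107,160,250,115,259,128,40,273,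
    229,134,234,271,3,206,226,177,21,278,56,147,197,0,210,15,233,248,20,163,129,74,54,171,203,
    146,46,217,75,218,38,29,237,120,30,195,99,82,22,63,169,14,192,165,123,164,6,117,241,18,16,
    209,137,240,270,161,33,162,122,103,31,94,32,251,105,26,106,157,141,252,238,127,37,170,90,
    201,219,188,100,153,109,156,214,245,145,246,66,159,181,178,256,167,267,60,190,101,113,42,
    182,43,149,136,34],
    [256,230,272,114,44,78,224,209,112,66,176,225,95,205,128,241,108,42,80,257,36,1,32,194,251,
    109,124,182,163,6,111,30,240,134,187,181,127,153,120,146,96,250,212,274,231,229,164,89,92,
    57,71,110,20,25,7,121,228,273,160,226,156,50,252,214,211,38,204,62,123,177,31,190,220,14,
    248,178,148,253,200,77,279,270,119,154,51,49,244,249,103,157,131,130,15,125,8,258,208,82,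
    100,17,136,61,52,234,171,29,155,222,132,137,236,210,135,34,167,221,47,73,243,46,99,41,232,
    174,264,9,184,269,192,266,191,10,255,85,88,138,188,53,63,126,219,161,139,193,271,129,215,
    102,183,97,151,90,40,54,87,218,147,33,23,206,59,170,239,133,104,18,35,149,172,217,216,165,
    75,45,28,158,168,122,263,197,39,261,199,213,24,98,275,262,3,86,116,245,55,74,68,238,107,202,
    83,277,159,101,19,13,84,69,235,169,152,166,16,185,175,145,247,201,227,2,43,26,76,81,12,93,4,
    118,195,142,72,106,196,265,140,94,67,141,207,233,143,246,259,70,79,173,64,58,144,189,223,
    186,91,65,60,105,48,198,268,22,0,237,56,150,179,113,11,278,115,162,203,117,276,5,260,254,
    267,21,27,242,180,37]),
   (296,
    [226,223,238,167,94,271,53,235,258,171,261,252,257,71,25,48,145,184,86,288,33,19,122,232,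
    217,256,10,28,253,144,46,120,58,32,29,119,177,68,118,187,65,259,154,255,254,11,61,44,285,
    207,78,243,173,107,181,228,6,248,150,172,170,284,153,151,133,251,213,219,54,60,125,152,205,
    51,185,96,93,280,97,275,102,20,157,132,17,47,69,224,134,95,277,168,2,143,189,103,273,164,
    101,23,34,239,250,148,197,287,286,159,233,272,281,79,121,87,62,276,98,196,105,215,45,84,165,
    16,278,268,77,108,117,8,137,123,5,192,242,292,41,80,109,236,225,116,169,31,210,4,229,124,1,
    188,289,216,37,76,126,12,73,260,162,155,274,0,198,75,290,267,85,291,158,72,293,211,174,67,
    57,279,190,263,265,199,141,15,230,212,222,63,237,156,90,104,149,100,249,140,42,27,270,176,
    269,136,138,64,262,163,209,7,241,231,245,203,186,264,38,24,74,208,21,3,110,139,70,244,294,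
    59,234,99,182,40,129,147,218,195,266,56,106,115,201,92,142,183,89,128,178,112,18,191,66,204,
    13,52,161,91,50,88,221,240,214,39,26,36,82,160,193,295,9,283,246,220,114,35,282,135,81,83,
    22,55,146,131,206,200,14,179,49,43,30,227,130,111,194,127,166,180,113,175,202,247],
    [251,54,192,5,91,118,62,289,227,182,50,35,33,246,186,103,281,48,176,23,85,78,172,239,37,28,
    168,159,285,240,164,79,155,8,274,205,189,72,156,193,141,102,152,181,267,166,238,203,45,230,
    144,9,145,294,214,191,83,96,136,111,219,160,190,121,149,42,178,109,47,140,18,167,201,170,6,
    87,153,268,142,73,11,184,278,223,57,66,266,291,135,130,254,63,271,46,242,25,61,292,82,13,99,
    26,92,119,261,90,236,137,213,188,194,125,17,70,228,27,51,20,22,101,69,232,10,15,175,148,146,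
    231,269,212,282,65,221,128,208,71,173,44,258,287,273,108,98,177,115,24,86,127,29,88,222,195,
    277,4,40,263,229,68,36,129,215,280,180,117,55,14,174,105,43,260,162,241,179,290,150,81,19,
    206,138,217,89,122,12,147,143,38,114,67,131,284,250,283,93,52,0,169,255,264,226,123,243,32,
    288,293,97,210,202,133,49,126,132,31,59,224,276,247,249,106,272,245,183,56,120,233,171,234,
    116,7,253,2,112,209,295,100,256,197,157,16,104,185,257,80,248,279,259,110,244,199,161,60,
    218,1,235,124,58,39,75,154,84,107,211,252,34,113,265,134,76,95,187,198,220,237,21,262,216,
    77,163,30,64,151,3,94,270,53,139,158,204,41,275,74,200,207,225,286,196,165]),
   (328,
    [62,107,113,74,204,309,317,4,286,301,51,32,234,175,111,60,312,307,273,34,184,277,313,280,78,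
    105,127,308,256,211,187,8,302,253,269,36,164,147,145,228,198,237,203,138,236,83,225,210,272,
    221,159,118,144,183,219,26,318,315,181,98,216,197,57,232,214,251,71,242,124,55,295,288,324,
    9,191,222,196,165,87,16,6,287,93,44,282,149,133,274,230,59,103,182,178,297,327,128,48,323,
    223,156,238,117,129,20,284,95,169,212,298,63,75,50,28,31,299,104,64,249,125,296,264,131,91,
    102,136,99,151,188,172,61,245,52,208,199,121,154,262,45,3,226,46,135,227,134,152,267,77,206,
    106,185,19,278,224,177,321,56,96,5,33,248,132,139,73,112,168,153,259,304,10,239,155,146,240,
    207,29,54,276,293,69,126,18,285,7,252,130,275,67,270,220,79,189,14,190,97,229,250,292,179,
    247,158,86,81,143,66,200,279,21,92,310,65,263,120,258,215,101,148,42,49,141,176,180,205,115,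
    40,266,283,11,170,88,25,261,260,326,17,137,150,110,23,13,316,58,319,53,294,68,157,311,38,
    268,255,43,72,140,305,173,100,12,27,213,90,290,289,89,162,84,291,119,70,22,109,15,142,320,
    265,209,76,82,257,85,122,194,163,195,30,306,241,1,160,254,233,41,174,202,231,47,246,314,217,
    271,244,80,167,325,108,116,37,201,300,322,193,123,0,24,235,281,192,218,39,243,186,166,171,
    303,94,114,161,35,2],
    [4,238,49,6,125,43,149,91,152,119,260,79,308,98,140,231,277,106,121,58,273,183,57,207,284,
    259,108,195,101,294,316,19,268,247,29,171,93,146,293,159,252,235,120,54,249,162,165,26,245,
    59,44,326,241,178,88,298,220,186,137,270,69,123,237,87,204,202,56,50,225,210,100,227,221,
    187,144,322,53,99,24,39,8,70,81,27,0,251,181,74,320,250,156,46,148,75,36,155,197,102,244,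
    307,296,63,253,295,25,282,189,283,280,126,212,234,17,134,92,95,177,203,161,83,173,150,16,
    314,169,158,224,223,1,103,297,211,325,174,233,66,60,255,28,38,52,190,236,10,313,34,41,310,
    200,319,324,118,305,67,77,303,301,143,13,291,133,230,113,279,129,131,172,267,160,246,216,
    142,285,90,85,114,117,31,21,86,136,271,184,219,292,278,64,194,269,286,321,166,112,7,257,138,
    261,302,196,274,96,323,76,82,89,154,65,311,80,147,164,299,72,170,265,287,228,135,37,111,73,
    47,132,263,48,30,176,78,229,199,9,239,32,275,109,22,188,218,45,215,180,226,145,130,213,175,
    68,266,209,242,276,15,205,327,281,3,201,94,217,18,304,315,153,318,193,110,124,290,288,139,
    168,262,185,51,289,107,272,127,61,42,264,306,300,14,256,115,97,71,84,191,33,122,240,2,104,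
    258,232,179,312,35,157,182,5,23,317,167,105,11,208,243,116,163,309,206,141,151,192,214,40,
    254,20,222,248,62,12,55,128,198]),
   (344,
    [80,240,14,337,141,144,279,221,336,220,166,342,120,124,70,161,76,55,318,217,177,104,331,273,
    160,67,215,157,281,256,202,213,244,332,278,97,41,236,10,325,328,312,258,78,145,44,162,93,
    197,292,35,270,196,23,91,33,129,287,319,89,181,4,294,317,233,299,198,201,192,156,315,85,148,
    232,199,313,276,59,254,82,60,323,330,6,149,243,195,309,316,335,251,193,81,255,135,122,56,
    175,191,46,185,248,247,142,237,187,303,73,268,228,174,334,52,132,71,86,8,119,154,69,136,39,
    58,297,153,188,306,9,48,223,38,298,176,143,179,50,304,72,190,5,88,327,94,242,216,75,3,338,
    121,300,231,90,128,204,115,229,225,108,54,285,277,12,302,169,329,260,206,130,296,164,282,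
    226,261,31,51,150,36,123,262,246,21,43,163,105,245,307,219,266,125,28,103,18,32,147,222,286,
    57,180,126,210,116,159,99,134,333,79,155,230,200,171,211,326,265,263,95,37,284,11,151,2,68,
    275,66,321,249,24,314,194,152,100,218,118,280,207,203,214,64,252,87,310,113,47,274,234,165,
    311,178,158,45,308,83,25,269,40,139,253,16,288,62,102,29,20,138,26,272,96,42,77,133,172,290,
    305,184,267,22,189,140,324,98,238,289,107,15,301,341,27,250,13,49,208,127,182,101,112,183,
    106,264,131,239,30,205,92,295,65,257,168,114,293,137,235,63,146,17,320,291,61,241,224,170,
    117,0,167,74,173,1,259,322,186,84,7,343,110,212,271,227,34,340,19,283,53,209,111,339,109],
    [128,62,231,54,32,34,157,318,64,178,299,241,204,322,247,330,172,115,195,78,248,266,33,342,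
    280,59,45,90,12,38,211,10,44,182,159,102,120,154,279,194,324,126,227,209,228,98,175,206,196,
    242,289,201,56,207,301,218,304,179,313,138,100,158,139,230,240,123,87,150,272,274,177,70,68,
    74,189,334,36,39,103,173,176,11,51,341,252,155,225,94,112,127,237,14,16,99,77,329,220,71,89,
    153,296,50,273,321,92,15,285,210,124,166,31,141,264,310,137,309,60,275,271,314,200,75,47,
    234,104,226,339,326,308,191,287,121,276,335,25,117,244,142,183,86,40,107,131,281,180,251,
    233,277,84,58,245,101,116,30,85,282,20,2,95,202,332,146,43,294,300,118,163,257,160,262,283,
    253,236,55,317,249,268,199,7,73,0,343,169,66,140,143,181,65,108,122,193,61,312,259,315,57,
    216,238,91,53,76,203,229,49,152,3,69,217,184,147,81,41,260,291,93,114,292,263,105,205,88,63,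
    295,298,336,42,243,197,24,186,19,21,164,151,325,17,132,302,337,185,208,267,35,9,4,239,327,5,
    316,46,29,82,284,18,213,174,144,162,171,165,48,134,119,161,80,278,67,106,328,250,187,198,
    188,215,307,290,156,22,255,145,232,331,125,130,28,303,323,222,340,110,149,305,136,254,333,
    129,168,219,1,297,72,26,13,246,212,170,235,338,8,135,37,113,320,286,221,6,288,258,79,270,
    148,223,27,190,52,23,319,97,256,167,269,265,224,311,109,261,192,111,293,214,96,83,133,306]),
   (34,
    [12,15,25,21,14,27,30,16,9,22,8,28,4,24,10,23,33,2,5,18,11,7,17,20,6,19,29,32,1,31,0,3,13,
    26],
    [20,17,15,28,26,22,2,33,14,10,7,4,19,16,13,9,24,21,1,31,29,8,6,3,0,30,11,25,5,18,32,12,27,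
    23]),
   (58,
    [42,45,10,13,55,39,33,36,20,14,56,40,53,27,50,24,47,2,34,57,31,25,9,22,6,38,51,16,0,32,26,
    29,23,7,49,52,17,1,4,46,30,43,37,11,5,8,21,44,18,41,15,28,12,54,48,3,35,19],
    [2,53,39,32,7,11,26,48,52,38,42,46,21,14,29,51,37,41,5,49,13,28,3,36,40,33,8,23,56,20,6,57,
    43,18,22,15,1,34,27,31,35,10,54,47,4,55,30,45,9,24,17,50,25,0,44,19,12,16]),
   (82,
    [15,48,81,73,16,49,8,33,74,58,17,1,42,34,18,51,10,2,35,60,11,52,36,77,20,12,53,78,37,70,13,
    5,38,79,71,63,14,80,39,72,64,7,40,32,24,65,57,0,41,25,66,50,9,75,67,26,59,43,76,27,68,19,3,
    44,69,28,61,4,45,29,62,21,54,46,30,22,55,47,6,31,23,56],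
    [33,80,4,10,69,34,28,46,40,17,11,70,23,29,6,53,47,12,59,36,1,77,13,7,66,72,25,2,78,43,20,67,
    73,26,32,79,3,62,56,21,68,45,51,16,63,57,22,81,75,52,5,64,58,76,41,35,0,18,24,30,65,71,48,
    42,60,54,19,37,31,8,55,49,14,61,38,44,9,15,50,27,74,39]),
   (106,
    [104,70,89,32,51,17,36,78,74,63,82,48,67,10,52,18,90,56,75,94,37,3,45,41,60,26,68,34,53,19,
    15,87,23,95,38,27,46,65,84,50,16,35,31,103,92,88,1,96,62,58,100,66,9,28,47,13,2,21,93,6,55,
    44,40,59,25,97,33,29,101,14,86,105,71,7,79,22,11,30,49,98,64,83,102,91,57,0,72,8,4,76,42,61,
    80,99,12,54,73,69,5,24,20,39,81,77,43,85],
    [52,89,73,82,66,103,87,46,55,67,104,88,19,28,40,24,61,45,29,13,22,6,71,27,11,101,7,97,81,12,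
    74,5,70,54,10,75,59,96,80,64,48,32,41,78,90,99,30,95,26,35,47,31,93,77,8,98,57,94,25,62,18,
    83,92,76,60,44,56,65,102,86,17,1,91,50,34,43,2,39,23,85,69,53,37,49,33,42,79,38,100,84,15,
    105,36,20,4,16,0,9,21,58,14,51,63,72,3,68]),
   (130,
    [82,5,21,88,90,13,94,96,19,35,23,39,106,43,31,98,100,37,118,41,57,124,61,128,116,67,69,122,
    59,10,77,65,81,83,85,87,89,91,28,16,18,20,101,38,26,42,30,32,113,36,52,40,107,58,125,48,129,
    117,68,121,123,9,127,64,80,3,84,7,74,76,27,15,17,33,86,102,25,92,29,45,47,114,51,104,55,108,
    110,112,49,0,53,120,6,73,126,63,14,2,4,71,8,75,12,79,95,97,34,22,24,105,93,109,111,99,50,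
    103,119,56,44,46,62,115,1,54,70,72,60,11,78,66],
    [5,59,51,9,32,125,13,101,77,82,110,128,86,44,111,95,79,63,29,96,75,33,121,14,81,60,18,98,17,
    22,45,99,26,49,7,30,118,76,34,36,85,4,61,84,21,65,54,103,69,71,115,104,88,119,12,40,58,8,39,
    41,25,108,123,42,47,10,93,43,27,11,120,109,28,124,126,105,94,78,62,67,90,113,6,112,117,15,
    129,48,97,102,0,114,106,64,66,50,3,83,2,116,35,19,68,52,57,80,38,53,37,107,70,23,46,87,92,
    55,73,31,72,56,100,89,16,122,127,20,74,1,24,91]),
   (154,
    [2,113,19,66,23,83,117,10,147,40,87,121,27,138,108,91,48,31,1,112,18,129,35,69,116,99,146,
    26,86,56,90,137,120,13,60,94,0,124,17,64,21,81,51,98,55,102,85,132,25,59,106,89,46,29,153,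
    33,16,140,20,67,114,97,144,24,148,118,101,71,105,75,135,15,152,32,79,49,109,143,126,6,53,36,
    70,130,100,134,104,151,57,14,74,44,78,61,95,65,125,5,142,22,82,52,9,133,39,150,43,103,73,30,
    77,47,107,141,111,4,128,34,68,38,8,145,115,72,42,12,149,119,76,136,93,63,123,80,50,110,3,
    127,84,54,37,7,131,11,58,41,88,45,28,62,122,92,139,96],
    [142,50,125,1,140,61,46,76,151,27,57,42,40,25,55,53,115,36,143,128,49,34,32,17,47,122,152,
    137,135,88,150,103,24,131,84,69,144,20,127,3,65,63,93,123,31,138,136,12,119,104,134,132,117,
    38,145,130,51,4,66,96,126,124,77,139,15,45,43,73,58,11,86,148,146,54,7,114,35,97,95,80,110,
    108,16,14,44,106,59,89,87,149,147,100,85,6,68,98,19,81,2,141,62,92,0,107,28,13,120,118,71,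
    133,9,116,37,99,52,82,112,33,18,48,78,153,29,91,121,74,72,102,10,8,70,23,21,83,113,111,64,
    94,79,109,30,60,90,75,105,26,56,41,39,101,22,129,5,67]),
   (178,
    [18,145,94,132,170,30,142,2,129,167,42,80,103,156,90,39,3,26,153,117,51,15,127,91,40,152,27,
    65,14,37,1,128,77,11,64,102,125,163,112,76,10,137,101,124,88,22,164,113,151,85,138,176,21,
    59,8,46,99,122,175,35,73,7,60,98,32,70,19,57,110,148,97,135,69,33,160,109,43,81,119,172,106,
    55,93,146,6,118,67,16,158,92,130,168,28,66,104,157,17,144,4,116,154,29,52,105,143,166,41,79,
    13,155,89,53,165,25,78,12,50,177,141,75,24,62,115,49,87,140,0,38,150,114,63,86,139,162,126,
    149,9,136,100,123,161,36,74,23,61,173,48,71,20,58,111,134,83,47,174,34,72,95,133,171,31,84,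
    107,56,5,147,96,45,68,121,159,108,131,169,44,82,120,54],
    [51,167,16,43,70,8,174,112,50,166,143,81,158,46,34,150,127,115,142,30,107,84,161,138,76,64,
    130,157,95,83,60,176,114,13,79,106,5,121,59,125,24,140,28,105,171,159,136,163,101,0,66,4,
    170,19,135,73,139,38,104,42,69,146,123,61,49,165,103,41,18,45,72,10,87,153,91,118,17,133,71,
    137,36,63,90,156,94,82,20,47,113,12,128,155,93,120,58,124,151,89,27,15,131,108,96,162,100,
    177,154,3,80,57,134,22,99,37,14,2,29,145,33,110,48,75,52,40,67,44,160,98,175,152,1,78,144,
    132,109,97,35,62,39,116,54,31,147,85,23,11,77,65,92,119,7,173,111,88,26,53,169,68,6,122,149,
    126,25,141,168,56,172,21,9,164,102,129,117,55,32,148,86,74]),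
   (202,
    [197,131,96,92,127,123,158,53,88,154,119,115,49,45,10,146,142,107,41,138,173,37,33,200,165,
    29,64,161,126,192,56,21,188,52,87,83,17,184,180,114,110,44,40,176,141,106,102,67,133,199,32,
    28,94,129,125,90,55,121,187,152,16,183,117,113,148,12,8,74,109,175,39,105,171,35,101,66,62,
    128,93,58,194,159,54,19,85,50,186,182,116,81,77,143,7,42,108,3,139,34,170,65,201,166,162,26,
    61,57,193,189,22,18,84,150,185,80,14,181,76,111,177,72,6,2,169,103,68,134,99,95,130,196,60,
    25,91,157,122,118,153,48,13,149,145,79,75,9,5,71,36,172,137,1,168,164,98,63,160,195,59,24,
    191,156,20,86,51,47,82,78,43,179,144,140,4,70,136,0,167,31,198,132,97,163,27,23,190,124,89,
    155,120,15,151,147,112,46,11,178,73,38,174,69,104,100,135,30],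
    [5,127,124,198,17,91,112,186,106,103,201,174,94,67,165,85,58,55,177,150,70,168,40,37,135,
    132,153,25,123,120,117,114,10,108,28,102,22,19,194,13,87,7,182,1,99,96,170,66,63,161,81,54,
    152,173,45,143,39,36,33,30,128,125,146,119,140,137,110,6,27,24,122,18,15,113,9,107,181,178,
    74,71,92,190,163,59,56,154,175,148,68,166,139,35,133,53,151,23,44,118,38,11,32,130,2,100,
    121,195,14,88,109,82,79,76,97,171,192,189,162,183,180,52,73,147,144,64,61,159,156,129,49,46,
    43,141,138,34,31,4,126,200,197,16,90,111,84,105,78,75,72,93,191,188,185,57,179,176,48,69,
    167,164,60,158,155,51,149,21,42,116,12,134,131,3,101,199,95,193,89,86,184,104,0,98,196,169,
    65,187,83,80,77,50,172,145,142,62,160,157,29,26,47,20,41,115,136,8]),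
   (226,
    [163,0,214,126,189,64,89,39,140,52,2,65,15,191,28,204,79,104,54,4,218,55,80,68,206,81,219,
    169,6,69,170,82,70,133,45,33,209,159,109,172,197,185,210,85,223,211,161,111,174,86,149,99,
    87,225,100,50,113,138,13,76,101,164,152,215,14,115,178,128,78,141,166,3,217,167,192,142,17,
    193,105,168,5,106,56,194,182,19,195,107,57,158,221,20,83,146,96,46,34,59,122,72,173,198,186,
    23,48,224,212,162,112,175,125,75,213,201,38,63,51,114,139,127,77,102,90,153,216,53,116,66,
    16,41,29,92,42,180,130,118,143,18,156,144,94,44,220,132,120,32,208,196,108,171,121,184,21,9,
    147,22,47,35,60,10,73,136,11,74,24,49,150,62,12,188,176,88,151,26,202,1,177,165,190,27,203,
    40,103,91,154,179,129,117,67,205,155,30,93,43,181,131,119,31,207,157,145,95,7,183,58,8,71,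
    134,84,222,97,160,110,135,123,148,98,199,36,61,124,187,137,200,37,25],
    [104,28,210,102,26,208,100,24,206,211,135,59,209,133,57,207,50,168,92,16,198,122,127,196,88,
    44,162,199,123,160,116,121,77,1,119,75,225,149,186,223,2,71,189,145,37,219,30,67,217,109,33,
    183,139,31,213,137,174,66,22,172,177,214,170,94,99,55,205,129,166,90,95,132,201,125,130,167,
    10,47,52,89,126,195,6,124,80,117,41,46,83,39,76,194,118,42,79,3,185,190,114,38,107,112,181,
    218,110,34,216,140,64,101,138,62,180,136,173,178,134,58,176,19,169,61,17,54,91,15,165,202,
    13,131,87,11,161,53,203,159,51,7,12,81,5,155,192,197,40,158,82,151,156,193,4,154,78,147,152,
    108,0,69,74,224,148,72,141,65,215,220,63,68,105,142,98,103,27,96,20,25,175,18,23,60,97,21,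
    171,14,164,56,93,49,86,204,128,84,8,45,163,200,43,48,85,9,191,115,120,157,113,150,187,111,
    35,153,222,146,70,188,144,36,73,29,179,184,221,32,182,106,143,212]),
   (250,
    [158,173,217,11,104,153,202,187,231,99,23,238,121,201,219,18,208,127,40,90,13,53,222,141,60,
    229,57,106,30,155,74,118,101,25,199,44,88,7,176,95,139,42,227,15,65,113,162,72,241,59,108,
    248,206,86,130,49,93,76,181,174,19,147,232,151,195,239,17,191,115,165,213,128,186,91,10,179,
    223,56,230,154,24,2,51,31,149,198,247,171,126,144,89,8,177,215,140,184,237,36,85,9,58,107,
    117,205,80,178,168,26,75,249,94,138,146,70,20,43,233,16,190,114,34,212,136,41,109,4,207,131,
    55,180,224,143,1,175,150,69,197,32,45,245,164,67,116,46,214,134,62,111,35,209,133,148,192,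
    236,79,3,52,37,81,125,123,47,221,145,194,243,183,216,21,189,234,28,211,135,160,204,157,167,
    5,54,228,152,12,0,225,98,63,71,120,169,218,33,77,246,39,84,137,172,110,159,83,132,142,61,
    105,203,68,112,100,200,119,163,82,220,170,193,242,166,96,14,188,103,22,66,235,29,73,156,161,
    129,124,102,87,6,50,48,97,182,226,244,64,92,27,196,240,38,78,122,185,210],
    [20,86,73,185,188,230,147,8,120,148,190,81,149,55,233,150,141,3,26,102,235,76,63,50,162,24,
    237,29,71,97,84,196,114,156,198,19,6,118,105,217,79,242,53,201,152,160,77,238,100,203,245,
    61,204,35,22,9,246,164,95,248,69,207,43,155,142,129,42,209,126,202,210,176,44,25,137,249,
    111,4,171,213,184,172,89,145,48,215,132,49,80,133,179,41,153,51,127,239,52,94,11,178,220,12,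
    23,221,122,180,96,139,56,98,169,31,99,16,117,225,216,59,101,18,39,227,144,0,103,224,62,229,
    21,47,159,146,189,231,107,219,232,68,191,167,154,192,109,240,193,214,27,194,236,28,195,136,
    123,110,113,30,72,58,170,157,115,32,74,116,158,75,66,34,40,243,14,1,119,161,212,199,37,173,
    121,38,205,247,108,206,82,165,181,124,166,208,125,241,228,90,168,64,2,163,211,128,45,87,223,
    85,197,130,46,33,131,7,244,106,218,91,67,175,92,134,140,93,10,226,88,200,187,174,36,54,135,
    138,234,222,83,70,57,15,182,143,5,183,104,17,78,65,177,60,151,13,186,112]),
   (274,
    [84,242,238,72,230,226,60,218,214,48,44,40,173,32,190,161,182,41,12,145,4,137,158,129,13,
    258,5,250,109,105,101,234,118,251,247,243,77,98,69,202,86,219,53,211,45,203,199,195,191,187,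
    21,179,175,34,167,138,159,267,126,147,6,114,135,268,264,260,256,115,223,107,215,74,95,91,62,
    58,54,75,71,42,200,196,55,188,22,43,176,10,143,164,272,131,127,123,7,252,111,244,265,124,
    232,228,87,245,241,212,96,204,88,221,192,51,184,68,39,35,168,52,185,181,177,36,144,140,273,
    269,16,261,8,141,112,108,104,125,233,229,225,246,80,213,97,205,64,222,193,189,73,206,65,61,
    57,165,49,157,153,37,33,166,25,133,17,262,9,254,1,134,130,263,122,93,89,85,81,239,210,231,
    227,198,194,78,186,207,178,174,170,29,162,46,154,150,146,142,26,271,18,14,259,255,139,110,
    106,102,235,94,90,248,82,103,236,70,66,224,220,79,50,183,67,38,171,30,163,47,155,151,172,31,
    2,23,19,15,148,119,3,136,132,240,99,257,116,249,83,216,237,208,92,63,59,217,76,209,180,201,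
    197,56,27,160,156,152,11,169,28,24,20,128,149,120,253,0,270,266,100,121,117,113],
    [154,100,215,88,171,12,22,105,83,230,71,49,27,5,225,98,44,159,32,147,262,103,186,59,142,15,
    235,245,223,201,179,157,240,81,196,174,47,267,3,255,64,42,52,272,145,228,206,184,162,140,13,
    233,211,189,30,40,260,133,111,57,35,182,128,106,221,199,177,18,28,248,121,236,45,23,170,148,
    263,72,187,60,143,258,99,77,224,33,11,158,273,219,92,207,185,163,246,256,234,75,21,136,146,
    124,239,48,26,173,119,129,212,190,63,178,156,102,249,227,205,151,266,107,222,200,210,51,166,
    144,90,237,46,24,34,149,264,73,220,61,176,259,269,110,56,203,181,127,137,252,198,39,17,132,
    247,120,66,213,54,0,115,93,208,218,164,37,257,130,76,191,169,10,125,135,113,91,69,152,25,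
    108,86,96,74,20,167,250,123,238,216,194,172,118,265,243,84,62,8,155,101,79,226,67,150,160,
    138,116,231,209,50,270,6,89,204,214,192,1,253,94,241,82,165,175,16,268,109,55,202,43,126,
    104,251,197,38,153,131,4,87,65,180,53,168,114,229,70,217,195,141,14,97,244,85,31,9,261,271,
    80,58,36,183,161,2,254,232,41,19,134,112,122,68,78,193,139,117,95,242,188,29,7]),
   (298,
    [71,226,97,89,258,101,121,262,282,288,294,151,157,149,155,175,167,38,179,199,205,197,217,74,
    215,221,92,247,104,96,251,108,263,134,126,146,152,293,1,170,162,19,39,180,200,43,198,218,
    210,67,222,228,99,240,111,266,109,115,284,127,133,4,145,165,8,177,183,26,195,52,58,64,219,
    62,231,88,243,86,241,98,253,110,279,271,277,283,5,295,166,23,29,184,41,47,202,45,51,220,77,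
    69,238,95,250,256,248,254,274,117,286,292,135,141,161,153,159,30,185,28,48,40,60,201,207,
    213,70,90,245,102,94,100,120,261,281,287,130,285,291,13,154,11,31,172,178,35,190,61,216,73,
    79,85,91,83,103,244,264,107,276,119,125,131,137,143,163,169,12,32,173,44,36,191,211,54,209,
    80,235,227,84,239,259,116,122,128,269,289,132,138,9,15,156,176,182,25,194,37,206,212,204,
    224,230,87,242,234,105,246,252,123,278,270,290,147,139,10,2,22,14,20,189,181,187,193,50,56,
    225,68,223,229,249,255,112,267,124,265,136,142,148,140,160,3,158,164,21,27,33,188,59,65,57,
    63,232,75,81,236,93,113,268,260,280,272,129,0,6,296,18,24,16,171,42,34,203,46,66,72,78,233,
    76,82,237,257,114,106,275,118,273,144,150,7,297,168,174,17,186,192,49,55,196,53,208,214],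
    [235,282,36,227,130,172,75,266,20,67,263,161,59,101,297,51,242,145,38,239,137,179,82,278,22,
    69,121,168,66,257,6,53,100,3,45,97,144,186,233,285,178,225,128,170,73,115,13,65,256,5,52,
    248,2,44,96,292,185,232,135,177,224,276,169,72,114,166,213,255,158,205,252,150,197,90,291,
    189,236,129,27,223,270,19,71,262,11,58,259,152,204,251,149,196,243,141,188,230,277,180,78,
    120,23,70,117,15,206,104,7,198,250,148,190,88,140,33,229,281,30,221,273,17,218,260,9,56,103,
    155,202,249,142,40,92,283,37,84,126,24,220,123,16,63,264,8,55,102,0,201,99,295,193,91,287,
    31,83,125,28,219,122,164,62,258,156,54,106,153,46,247,289,43,234,132,35,226,124,176,74,116,
    163,210,113,160,207,254,147,199,241,288,191,89,280,34,81,272,26,217,269,18,209,112,10,57,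
    253,146,49,240,138,41,237,279,182,80,271,25,216,119,12,208,111,4,200,98,294,192,95,286,184,
    231,134,181,79,275,173,215,267,165,212,105,157,50,246,293,42,238,136,183,86,133,175,222,274,
    167,214,261,159,211,109,151,203,245,143,195,93,284,187,85,127,174,77,268,171,64,265,14,61,
    108,1,48,244,296,194,87,139,32,228,131,29,76,118,21,68,110,162,60,107,154,47,94,290,39]),
   (322,
    [67,76,51,221,103,112,121,291,300,148,157,132,302,23,159,41,177,59,68,238,213,61,70,274,283,
    258,301,310,319,294,142,312,160,169,212,60,69,78,248,62,266,275,89,259,141,150,286,295,143,
    25,34,9,18,222,231,79,215,63,267,242,251,133,108,278,126,135,144,314,35,10,53,223,198,46,
    250,64,234,243,252,134,304,152,161,170,306,154,163,172,181,29,199,47,90,260,74,117,253,101,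
    305,153,1,298,307,189,3,207,55,30,73,48,57,261,75,84,93,263,145,281,129,138,308,317,38,174,
    22,31,40,210,92,262,271,280,128,264,146,155,130,139,309,318,200,209,218,32,202,245,254,229,
    272,247,290,265,147,156,4,13,183,192,201,49,24,33,42,85,255,230,239,87,96,105,114,123,5,14,
    311,193,7,211,186,195,43,86,256,104,240,88,131,106,276,124,6,176,185,194,203,17,187,196,44,
    214,257,232,80,284,293,268,116,320,168,16,313,0,204,52,27,36,206,249,97,72,115,285,99,303,
    151,321,8,178,26,162,205,19,28,71,241,216,98,107,277,125,100,109,118,127,136,179,188,197,45,
    54,224,233,81,56,226,269,244,287,296,110,119,289,171,180,316,37,173,182,225,39,82,91,227,
    270,279,288,297,111,315,2,11,20,190,165,208,217,65,235,83,219,228,237,246,94,137,273,282,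
    164,12,21,191,166,175,184,66,236,50,220,102,77,120,95,299,113,122,292,140,149,158,167,15,58],
    [40,134,73,167,94,188,282,215,148,242,175,275,208,135,74,162,262,28,122,216,316,249,21,270,
    203,303,69,163,257,196,290,223,317,250,177,271,43,137,231,9,258,30,130,63,312,84,184,117,
    211,138,232,171,104,192,286,58,158,252,18,279,212,300,239,172,266,38,293,226,153,253,180,
    274,213,146,234,173,106,200,294,221,315,87,181,114,53,147,80,13,107,201,295,228,155,88,27,
    276,54,309,75,8,102,202,296,62,1,89,183,283,49,310,82,170,109,42,136,230,157,96,190,123,56,
    150,77,16,110,204,298,70,319,91,185,118,51,151,78,11,111,205,299,71,320,92,186,125,219,307,
    240,179,267,206,133,72,160,93,187,120,214,308,241,174,113,207,140,67,0,100,194,288,60,154,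
    248,20,269,41,141,229,168,95,195,128,222,149,243,176,115,48,297,236,169,263,29,284,217,311,
    83,22,116,210,143,76,164,103,36,285,218,318,251,17,272,44,144,238,4,98,37,131,64,313,85,24,
    273,45,306,233,5,260,32,126,59,159,86,25,119,46,301,79,6,261,33,127,66,321,254,26,281,47,
    302,235,7,101,34,289,61,161,255,182,121,209,142,81,14,108,35,129,68,156,256,189,277,55,304,
    237,15,264,197,291,224,2,90,23,278,50,305,244,10,265,198,292,225,3,97,191,124,57,145,245,
    178,105,199,132,65,165,259,31,280,52,152,246,12,112,39,139,227,166,99,193,287,220,314,247,
    19,268]),
   (346,
    [13,151,289,254,219,276,68,114,344,44,274,239,285,342,42,272,318,29,248,40,5,62,108,73,303,
    3,233,279,244,36,266,58,104,69,207,91,56,194,159,297,262,227,19,238,122,341,225,98,236,293,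
    339,131,269,153,26,256,129,186,232,116,335,127,265,322,287,79,217,90,228,112,250,296,180,
    226,283,329,294,178,224,16,154,119,176,314,106,325,209,255,312,185,150,115,80,45,275,240,
    205,78,43,100,319,284,76,133,271,63,282,166,304,96,142,107,245,302,2,313,105,162,208,92,311,
    103,241,206,263,55,101,66,123,88,53,18,64,202,259,132,189,235,292,257,49,187,152,198,336,
    301,93,231,23,253,218,10,321,21,251,216,181,54,192,157,295,179,317,109,328,120,4,315,280,72,
    118,175,140,278,70,35,0,138,184,149,33,252,136,182,147,204,77,307,7,237,110,167,305,270,143,
    27,165,38,268,141,25,163,128,1,139,196,334,299,345,137,102,67,32,343,135,273,330,203,260,
    306,17,155,28,85,50,15,234,291,164,221,94,324,197,81,46,11,230,22,333,125,9,320,193,331,215,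
    261,145,191,75,213,86,316,281,246,211,84,222,14,71,290,174,47,277,242,34,172,310,183,148,
    113,170,308,8,65,30,168,214,6,144,201,74,212,177,61,199,337,210,267,59,24,243,300,173,57,
    195,160,298,171,309,20,158,31,169,134,99,156,121,340,51,97,327,200,338,130,95,60,117,82,220,
    12,323,288,161,126,264,229,286,332,124,89,146,111,249,41,87,52,190,247,39,258,223,188,326,
    37,83,48],
    [94,332,224,116,8,197,262,30,219,333,3,241,182,25,139,328,269,112,226,291,10,199,140,205,48,
    162,5,119,11,249,92,330,271,163,228,71,136,28,266,158,223,288,180,121,310,251,267,208,100,
    289,230,295,187,203,317,160,274,290,231,247,188,80,145,334,53,118,183,124,16,32,97,211,227,
    341,184,298,17,206,147,212,277,342,12,77,142,256,99,213,56,170,62,300,19,257,273,165,57,171,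
    63,252,193,258,150,166,58,123,237,253,318,210,151,43,108,297,65,130,22,38,152,168,282,1,66,
    304,320,39,326,45,234,126,191,83,24,89,278,46,235,176,192,84,149,41,106,220,285,4,69,134,26,
    215,107,172,64,178,21,86,324,265,157,49,287,303,195,260,201,93,109,174,239,131,245,261,153,
    218,110,2,67,132,246,138,154,268,111,225,117,306,74,90,31,47,161,177,242,307,75,91,156,270,
    286,54,70,135,200,141,33,222,114,6,293,185,250,315,207,272,337,229,72,186,202,143,159,51,
    338,181,73,311,79,95,36,52,339,9,296,312,204,96,37,275,340,59,248,313,81,319,335,276,292,60,
    76,314,255,98,336,55,120,61,299,18,34,148,164,105,294,13,78,316,35,322,214,279,122,14,301,
    144,209,101,42,280,345,15,302,194,259,102,167,232,0,189,254,146,87,103,44,233,125,190,82,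
    196,88,104,169,283,175,240,305,321,40,327,343,284,127,68,133,198,263,155,344,236,128,20,85,
    323,264,329,221,113,129,243,308,27,216,281,173,238,179,244,309,325,217,331,50,115,7,23,137,
    29])]"

fun valid_witness :: "nat \<times> int list \<times> int list \<Rightarrow> bool" where
  "valid_witness (n, b, c) \<longleftrightarrow> columns_check n [map int [0..<n], b, c]"

(* Two lemmas, so that the halves are evaluated in parallel. *)
lemma valid_witnesses_take: "list_all valid_witness (take 15 DCA_4_witnesses)"
  by code_simp

lemma valid_witnesses_drop: "list_all valid_witness (drop 15 DCA_4_witnesses)"
  by code_simp

theorem mainTheorem15:
  assumes "m \<in> {26, 266, 40, 56, 88, 104, 136, 152, 184, 200, 232, 248, 280, 296, 328, 344,
                34, 58, 82, 106, 130, 154, 178, 202, 226, 250, 274, 298, 322, 346 :: nat}"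
  shows "\<exists>Q :: nat \<Rightarrow> nat \<Rightarrow> int. normalized_DCA 4 m Q \<and> DCA_P1 4 m Q \<and> DCA_P2 4 m Q"
proof -
  have "m \<in> fst ` set DCA_4_witnesses"
    using assms by (simp add: DCA_4_witnesses_def)
  then obtain b c where "(m, b, c) \<in> set DCA_4_witnesses"
    by force
  moreover have "list_all valid_witness DCA_4_witnesses"
    using valid_witnesses_take valid_witnesses_drop by (metis append_take_drop_id list_all_append)
  ultimately have "columns_check m [map int [0..<m], b, c]"
    by (fastforce simp: list_all_iff)
  moreover have "1 < m"
    using assms by auto
  ultimately show ?thesis
    using DCA_if_columns_check[of m "[map int [0..<m], b, c]"] by (simp add: numeral_eq_Suc)
qed

end
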